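(* Let $p$ be a prime and $n\ge 1$. The maximum, over all two-element subsets $\{P,Q\}\subseteq \mathbb Z_p^n$, of the number of distinct reduced Gröbner bases of the ideal $I(\{P,Q\})\subseteq \mathbb Z_p[x_1,\ldots,x_n]$ is $n$.
   Context: $\mathbb Z_p$ denotes the field of integers modulo $p$. For a finite set $S\subseteq \mathbb Z_p^n$, $I(S)$ is the ideal of all polynomials in $\mathbb Z_p[x_1,\ldots,x_n]$ vanishing at every point of $S$. The number of reduced Gröbner bases of an ideal means the number of distinct reduced Gröbner bases obtained as the monomial order ranges over all monomial orders. *)

theory Defs
  imports "HOL-Library.Poly_Mapping" "Berlekamp_Zassenhaus.Finite_Field"
begin

type_synonym monom = "nat \<Rightarrow>\<^sub>0 nat"
type_synonym 'a mpoly = "monom \<Rightarrow>\<^sub>0 'a"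

definition monoms :: "nat \<Rightarrow> monom set" where
  "monoms n = {m. Poly_Mapping.keys m \<subseteq> {..<n}}"

definition polys :: "nat \<Rightarrow> ('a::zero) mpoly set" where
  "polys n = {f. Poly_Mapping.keys f \<subseteq> monoms n}"

definition points :: "nat \<Rightarrow> 'a list set" where
  "points n = {x. length x = n}"

definition eval_mpoly :: "nat \<Rightarrow> ('a::comm_semiring_1) mpoly \<Rightarrow> 'a list \<Rightarrow> 'a" where
  "eval_mpoly n f x = (\<Sum>m\<in>Poly_Mapping.keys f. Poly_Mapping.lookup f m * (\<Prod>i<n. (x ! i) ^ Poly_Mapping.lookup m i))"

definition vanishing_ideal :: "nat \<Rightarrow> ('a::comm_semiring_1) list set \<Rightarrow> 'a mpoly set" where
  "vanishing_ideal n S = {f \<in> polys n. \<forall>x\<in>S. eval_mpoly n f x = 0}"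

definition monomial_order :: "nat \<Rightarrow> (monom \<Rightarrow> monom \<Rightarrow> bool) \<Rightarrow> bool" where
  "monomial_order n ord \<longleftrightarrow>
     (\<forall>a\<in>monoms n. ord a a) \<and>
     (\<forall>a\<in>monoms n. \<forall>b\<in>monoms n. ord a b \<and> ord b a \<longrightarrow> a = b) \<and>
     (\<forall>a\<in>monoms n. \<forall>b\<in>monoms n. \<forall>c\<in>monoms n. ord a b \<and> ord b c \<longrightarrow> ord a c) \<and>
     (\<forall>a\<in>monoms n. \<forall>b\<in>monoms n. ord a b \<or> ord b a) \<and>
     (\<forall>a\<in>monoms n. ord 0 a) \<and>
     (\<forall>a\<in>monoms n. \<forall>b\<in>monoms n. \<forall>c\<in>monoms n. ord a b \<longrightarrow> ord (a + c) (b + c))"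

definition lead_monom :: "(monom \<Rightarrow> monom \<Rightarrow> bool) \<Rightarrow> ('a::zero) mpoly \<Rightarrow> monom" where
  "lead_monom ord f = (THE m. m \<in> Poly_Mapping.keys f \<and> (\<forall>m'\<in>Poly_Mapping.keys f. ord m' m))"

definition lead_coeff_m :: "(monom \<Rightarrow> monom \<Rightarrow> bool) \<Rightarrow> ('a::zero) mpoly \<Rightarrow> 'a" where
  "lead_coeff_m ord f = Poly_Mapping.lookup f (lead_monom ord f)"

definition monom_dvd :: "monom \<Rightarrow> monom \<Rightarrow> bool" where
  "monom_dvd a b \<longleftrightarrow> (\<forall>i. Poly_Mapping.lookup a i \<le> Poly_Mapping.lookup b i)"

definition groebner_basis :: "nat \<Rightarrow> (monom \<Rightarrow> monom \<Rightarrow> bool) \<Rightarrow> ('a::zero) mpoly set \<Rightarrow> 'a mpoly set \<Rightarrow> bool" where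
  "groebner_basis n ord I G \<longleftrightarrow> finite G \<and> G \<subseteq> I \<and> 0 \<notin> G \<and>
     (\<forall>f\<in>I. f \<noteq> 0 \<longrightarrow> (\<exists>g\<in>G. monom_dvd (lead_monom ord g) (lead_monom ord f)))"

definition reduced_groebner_basis :: "nat \<Rightarrow> (monom \<Rightarrow> monom \<Rightarrow> bool) \<Rightarrow> ('a::{zero,one}) mpoly set \<Rightarrow> 'a mpoly set \<Rightarrow> bool" where
  "reduced_groebner_basis n ord I G \<longleftrightarrow> groebner_basis n ord I G \<and>
     (\<forall>g\<in>G. lead_coeff_m ord g = 1) \<and>
     (\<forall>g\<in>G. \<forall>h\<in>G. h \<noteq> g \<longrightarrow> (\<forall>m\<in>Poly_Mapping.keys g. \<not> monom_dvd (lead_monom ord h) m))"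

definition reduced_GBs :: "nat \<Rightarrow> ('a::{zero,one}) mpoly set \<Rightarrow> 'a mpoly set set" where
  "reduced_GBs n I = {G. \<exists>ord. monomial_order n ord \<and> reduced_groebner_basis n ord I G}"

end

theory Submission
  imports Defs "HOL-Library.List_Lexorder"
begin

text \<open>Let \<open>P \<noteq> Q\<close> and fix a monomial order. Among the variables \<open>x\<^sub>j\<close> with
\<open>P\<^sub>j \<noteq> Q\<^sub>j\<close> let \<open>x\<^sub>i\<close> be the smallest. For every monomial \<open>x\<^sup>m \<notin> {1, x\<^sub>i}\<close> the
polynomial \<open>x\<^sup>m - c - d x\<^sub>i\<close>, where \<open>c + d t\<close> is the line through \<open>(P\<^sub>i, P\<^sup>m)\<close> and
\<open>(Q\<^sub>i, Q\<^sup>m)\<close>, vanishes at \<open>P\<close> and \<open>Q\<close> and has leading monomial \<open>x\<^sup>m\<close>: a monomial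
below \<open>x\<^sub>i\<close> only involves variables on which \<open>P\<close> and \<open>Q\<close> agree. For the same reason no
nonzero element of \<open>I({P,Q})\<close> has leading monomial \<open>x\<^sub>i\<close>, and none is a constant. So
the leading monomials of the ideal are all monomials but \<open>1, x\<^sub>i\<close>, their minimal
generators are \<open>x\<^sub>j (j \<noteq> i)\<close> and \<open>x\<^sub>i\<^sup>2\<close>, and the reduced basis depends on the order
only through \<open>i\<close>: there are at most \<open>n\<close> of them. For \<open>P = (0,\<dots>,0)\<close> and
\<open>Q = (1,\<dots>,1)\<close> every \<open>i\<close> occurs, via the graded order giving \<open>x\<^sub>i\<close> weight 1 and the
other variables weight 2, and different \<open>i\<close> give different bases since only the one
for \<open>i\<close> contains a polynomial with monomial \<open>x\<^sub>i\<^sup>2\<close>.\<close>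

lemma finite_has_greatest_wrt_total:
  assumes "finite S" "S \<noteq> {}"
    and "\<forall>a\<in>S. \<forall>b\<in>S. \<forall>c\<in>S. R a b \<longrightarrow> R b c \<longrightarrow> R a c"
    and "\<forall>a\<in>S. \<forall>b\<in>S. R a b \<or> R b a"
  shows "\<exists>m\<in>S. \<forall>a\<in>S. R a m"
  using assms
proof (induction S rule: finite_ne_induct)
  case (singleton x)
  then show ?case by blast
next
  case (insert x F)
  then obtain m where m: "m \<in> F" "\<forall>a\<in>F. R a m"
    by blast
  show ?case
  proof (cases "R x m")
    case True
    then show ?thesis using m by blast
  next
    case False
    then have "R m x" using insert.prems m(1) by blast
    then show ?thesis using insert.prems m by blast
  qed
qed

subsection \<open>Monomials\<close>

definition var_monom :: "nat \<Rightarrow> monom" where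
  "var_monom j = Poly_Mapping.single j 1"

definition monom_val :: "nat \<Rightarrow> monom \<Rightarrow> 'a::comm_semiring_1 list \<Rightarrow> 'a" where
  "monom_val n m x = (\<Prod>i<n. (x ! i) ^ Poly_Mapping.lookup m i)"

lemma lookup_var_monom: "Poly_Mapping.lookup (var_monom j) k = (if k = j then 1 else 0)"
  by (simp add: var_monom_def lookup_single when_def)

lemma lookup_var_monom_sq:
  "Poly_Mapping.lookup (var_monom j + var_monom j) k = (if k = j then 2 else 0)"
  by (simp add: lookup_add lookup_var_monom)

lemma var_monom_neq_zero [simp]: "var_monom j \<noteq> 0"
  by (metis lookup_var_monom lookup_zero one_neq_zero)

lemma var_monom_eq_iff: "var_monom j = var_monom k \<longleftrightarrow> j = k"
  by (metis lookup_var_monom one_neq_zero)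

lemma monom_eq_var_monom_iff:
  "m = var_monom j \<longleftrightarrow> Poly_Mapping.lookup m j = 1 \<and> (\<forall>k\<noteq>j. Poly_Mapping.lookup m k = 0)"
  by (auto simp: lookup_var_monom intro!: poly_mapping_eqI)

lemma monom_eq_zero_iff: "m = 0 \<longleftrightarrow> (\<forall>k. Poly_Mapping.lookup m k = 0)"
  by (auto intro: poly_mapping_eqI)

lemma var_monom_sq_neq:
  "var_monom j + var_monom j \<noteq> 0" "var_monom j + var_monom j \<noteq> var_monom k"
  by (auto simp: monom_eq_zero_iff monom_eq_var_monom_iff lookup_var_monom_sq)

lemma var_monom_sq_eq_iff: "var_monom j + var_monom j = var_monom k + var_monom k \<longleftrightarrow> j = k"
  by (metis lookup_var_monom_sq zero_neq_numeral)

lemma monoms_iff: "a \<in> monoms n \<longleftrightarrow> (\<forall>j\<ge>n. Poly_Mapping.lookup a j = 0)"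
  unfolding monoms_def by (auto simp: in_keys_iff) (metis leI less_irrefl)

lemma zero_in_monoms [simp]: "0 \<in> monoms n"
  by (simp add: monoms_iff)

lemma var_monom_in_monoms: "j < n \<Longrightarrow> var_monom j \<in> monoms n"
  by (simp add: monoms_iff lookup_var_monom)

lemma add_in_monoms: "a \<in> monoms n \<Longrightarrow> b \<in> monoms n \<Longrightarrow> a + b \<in> monoms n"
  by (simp add: monoms_iff lookup_add)

lemma diff_in_monoms: "a \<in> monoms n \<Longrightarrow> a - b \<in> monoms n"
  by (simp add: monoms_iff lookup_minus)

lemma keys_subset_monoms: "f \<in> polys n \<Longrightarrow> Poly_Mapping.keys f \<subseteq> monoms n"
  unfolding polys_def by auto

lemma monom_val_zero [simp]: "monom_val n 0 x = 1"
  by (simp add: monom_val_def)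

lemma monom_val_var_monom:
  assumes "i < n"
  shows "monom_val n (var_monom i) x = x ! i"
proof -
  have "monom_val n (var_monom i) x = (\<Prod>j<n. if j = i then x ! j else 1)"
    unfolding monom_val_def by (rule prod.cong) (auto simp: lookup_var_monom)
  also have "\<dots> = x ! i"
    using assms by simp
  finally show ?thesis .
qed

lemma monom_val_eqI:
  assumes "\<And>j. j < n \<Longrightarrow> Poly_Mapping.lookup m j > 0 \<Longrightarrow> P ! j = Q ! j"
  shows "monom_val n m P = monom_val n m Q"
  unfolding monom_val_def by (rule prod.cong) (use assms in \<open>auto\<close>, metis assms power_0 not_gr0)

lemma eval_mpoly_eq_sum:
  assumes "finite S" "Poly_Mapping.keys f \<subseteq> S"
  shows "eval_mpoly n f x = (\<Sum>m\<in>S. Poly_Mapping.lookup f m * monom_val n m x)"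
  unfolding eval_mpoly_def monom_val_def
  by (rule sum.mono_neutral_left) (use assms in \<open>auto simp: in_keys_iff\<close>)

lemma monom_dvd_trans: "monom_dvd a b \<Longrightarrow> monom_dvd b c \<Longrightarrow> monom_dvd a c"
  unfolding monom_dvd_def using le_trans by blast

lemma monom_dvd_antisym: "monom_dvd a b \<Longrightarrow> monom_dvd b a \<Longrightarrow> a = b"
  unfolding monom_dvd_def by (rule poly_mapping_eqI) (meson antisym)

lemma monom_dvd_zero_iff: "monom_dvd a 0 \<longleftrightarrow> a = 0"
  unfolding monom_dvd_def monom_eq_zero_iff by simp

lemma monom_dvd_var_monom:
  assumes "monom_dvd a (var_monom i)"
  shows "a = 0 \<or> a = var_monom i"
proof -
  have le: "Poly_Mapping.lookup a k \<le> (if k = i then 1 else 0)" for k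
    using assms unfolding monom_dvd_def lookup_var_monom by blast
  then have "\<forall>k\<noteq>i. Poly_Mapping.lookup a k = 0"
    by (metis (full_types) le_zero_eq)
  moreover have "Poly_Mapping.lookup a i = 0 \<or> Poly_Mapping.lookup a i = 1"
    using le[of i] by auto
  ultimately show ?thesis
    unfolding monom_eq_zero_iff monom_eq_var_monom_iff by metis
qed

lemma var_monom_dvd_iff: "monom_dvd (var_monom j) m \<longleftrightarrow> Poly_Mapping.lookup m j \<ge> 1"
  unfolding monom_dvd_def lookup_var_monom by auto

lemma var_monom_sq_dvd_iff:
  "monom_dvd (var_monom j + var_monom j) m \<longleftrightarrow> Poly_Mapping.lookup m j \<ge> 2"
  unfolding monom_dvd_def lookup_var_monom_sq by auto

subsection \<open>Monomial orders\<close>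

locale monomial_ord =
  fixes n :: nat and ord :: "monom \<Rightarrow> monom \<Rightarrow> bool"
  assumes monomial_order: "monomial_order n ord"
begin

lemma ord_refl: "a \<in> monoms n \<Longrightarrow> ord a a"
  using monomial_order unfolding monomial_order_def by blast

lemma ord_antisym: "a \<in> monoms n \<Longrightarrow> b \<in> monoms n \<Longrightarrow> ord a b \<Longrightarrow> ord b a \<Longrightarrow> a = b"
  using monomial_order unfolding monomial_order_def by blast

lemma ord_trans:
  "a \<in> monoms n \<Longrightarrow> b \<in> monoms n \<Longrightarrow> c \<in> monoms n \<Longrightarrow> ord a b \<Longrightarrow> ord b c \<Longrightarrow> ord a c"
  using monomial_order unfolding monomial_order_def by blast

lemma ord_total: "a \<in> monoms n \<Longrightarrow> b \<in> monoms n \<Longrightarrow> ord a b \<or> ord b a"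
  using monomial_order unfolding monomial_order_def by blast

lemma zero_ord: "a \<in> monoms n \<Longrightarrow> ord 0 a"
  using monomial_order unfolding monomial_order_def by blast

lemma ord_add_right:
  "a \<in> monoms n \<Longrightarrow> b \<in> monoms n \<Longrightarrow> c \<in> monoms n \<Longrightarrow> ord a b \<Longrightarrow> ord (a + c) (b + c)"
  using monomial_order unfolding monomial_order_def by blast

lemma monom_dvd_imp_ord:
  assumes "a \<in> monoms n" "b \<in> monoms n" "monom_dvd a b"
  shows "ord a b"
proof -
  have "b = (b - a) + a"
    using assms(3) unfolding monom_dvd_def
    by (intro poly_mapping_eqI) (simp add: lookup_add lookup_minus)
  moreover have "ord (0 + a) ((b - a) + a)"
    using assms by (intro ord_add_right zero_ord diff_in_monoms) auto
  ultimately show ?thesis by simp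
qed

lemma var_monom_ord:
  "j < n \<Longrightarrow> m \<in> monoms n \<Longrightarrow> Poly_Mapping.lookup m j > 0 \<Longrightarrow> ord (var_monom j) m"
  by (simp add: monom_dvd_imp_ord var_monom_in_monoms var_monom_dvd_iff)

lemma ex_greatest:
  assumes "finite S" "S \<noteq> {}" "S \<subseteq> monoms n"
  shows "\<exists>m\<in>S. \<forall>m'\<in>S. ord m' m"
proof (rule finite_has_greatest_wrt_total[OF assms(1,2)])
  show "\<forall>a\<in>S. \<forall>b\<in>S. \<forall>c\<in>S. ord a b \<longrightarrow> ord b c \<longrightarrow> ord a c"
    using assms(3) by (meson ord_trans subsetD)
  show "\<forall>a\<in>S. \<forall>b\<in>S. ord a b \<or> ord b a"
    using assms(3) by (meson ord_total subsetD)
qed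

lemma ex_least:
  assumes "finite S" "S \<noteq> {}" "S \<subseteq> monoms n"
  shows "\<exists>m\<in>S. \<forall>m'\<in>S. ord m m'"
proof (rule finite_has_greatest_wrt_total[OF assms(1,2), where R = "\<lambda>a b. ord b a"])
  show "\<forall>a\<in>S. \<forall>b\<in>S. \<forall>c\<in>S. ord b a \<longrightarrow> ord c b \<longrightarrow> ord c a"
    using assms(3) by (meson ord_trans subsetD)
  show "\<forall>a\<in>S. \<forall>b\<in>S. ord b a \<or> ord a b"
    using assms(3) by (meson ord_total subsetD)
qed

lemma lead_monom_eqI:
  assumes "f \<in> polys n" "m \<in> Poly_Mapping.keys f" "\<forall>k\<in>Poly_Mapping.keys f. ord k m"
  shows "lead_monom ord f = m"
  unfolding lead_monom_def
  by (rule the_equality) (use assms keys_subset_monoms ord_antisym in blast)+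

lemma lead_monom_in_keys:
  assumes "f \<in> polys n" "f \<noteq> 0"
  shows "lead_monom ord f \<in> Poly_Mapping.keys f"
    and "\<forall>k\<in>Poly_Mapping.keys f. ord k (lead_monom ord f)"
proof -
  obtain m where "m \<in> Poly_Mapping.keys f" "\<forall>k\<in>Poly_Mapping.keys f. ord k m"
    using ex_greatest[of "Poly_Mapping.keys f"] assms keys_subset_monoms by auto
  with lead_monom_eqI[OF assms(1) this]
  show "lead_monom ord f \<in> Poly_Mapping.keys f" "\<forall>k\<in>Poly_Mapping.keys f. ord k (lead_monom ord f)"
    by auto
qed

lemma lead_monom_zero_imp_const:
  assumes "f \<in> polys n" "f \<noteq> 0" "lead_monom ord f = 0"
  shows "eval_mpoly n f x = Poly_Mapping.lookup f 0"
proof -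
  have "k = 0" if "k \<in> Poly_Mapping.keys f" for k
    using lead_monom_in_keys(2)[OF assms(1,2)] assms(3) keys_subset_monoms[OF assms(1)] that
    by (metis ord_antisym zero_ord zero_in_monoms subsetD)
  then have "Poly_Mapping.keys f \<subseteq> {0}"
    by blast
  then show ?thesis
    by (subst eval_mpoly_eq_sum[of "{0}"]) auto
qed

end

subsection \<open>The reduced basis attached to a coordinate\<close>

text \<open>\<open>basis_poly n P Q i m\<close> is \<open>x\<^sup>m\<close> minus the affine function \<open>c + d x\<^sub>i\<close> agreeing with \<open>x\<^sup>m\<close>
at \<open>P\<close> and \<open>Q\<close> (junk unless \<open>P\<^sub>i \<noteq> Q\<^sub>i\<close>). The standard monomials of \<open>I({P,Q})\<close> turn out to be
\<open>1\<close> and \<open>x\<^sub>i\<close>, whatever the order, so \<open>nonstandard_monoms n i\<close> are its leading monomials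
and \<open>min_nonstandard_monoms n i\<close> the minimal generators of its initial ideal.\<close>

definition interp_slope :: "nat \<Rightarrow> 'a::field list \<Rightarrow> 'a list \<Rightarrow> nat \<Rightarrow> monom \<Rightarrow> 'a" where
  "interp_slope n P Q i m = (monom_val n m P - monom_val n m Q) / (P ! i - Q ! i)"

definition interp_const :: "nat \<Rightarrow> 'a::field list \<Rightarrow> 'a list \<Rightarrow> nat \<Rightarrow> monom \<Rightarrow> 'a" where
  "interp_const n P Q i m = monom_val n m P - interp_slope n P Q i m * P ! i"

definition basis_poly :: "nat \<Rightarrow> 'a::field list \<Rightarrow> 'a list \<Rightarrow> nat \<Rightarrow> monom \<Rightarrow> 'a mpoly" where
  "basis_poly n P Q i m = Poly_Mapping.single m 1 - Poly_Mapping.single 0 (interp_const n P Q i m)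
      - Poly_Mapping.single (var_monom i) (interp_slope n P Q i m)"

definition nonstandard_monoms :: "nat \<Rightarrow> nat \<Rightarrow> monom set" where
  "nonstandard_monoms n i = monoms n - {0, var_monom i}"

definition min_nonstandard_monoms :: "nat \<Rightarrow> nat \<Rightarrow> monom set" where
  "min_nonstandard_monoms n i =
     {m \<in> nonstandard_monoms n i. \<forall>m'\<in>nonstandard_monoms n i. monom_dvd m' m \<longrightarrow> m' = m}"

definition red_basis :: "nat \<Rightarrow> 'a::field list \<Rightarrow> 'a list \<Rightarrow> nat \<Rightarrow> 'a mpoly set" where
  "red_basis n P Q i = basis_poly n P Q i ` min_nonstandard_monoms n i"

lemma nonstandard_monomsD:
  "m \<in> nonstandard_monoms n i \<Longrightarrow> m \<in> monoms n \<and> m \<noteq> 0 \<and> m \<noteq> var_monom i"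
  unfolding nonstandard_monoms_def by auto

lemma lookup_basis_poly:
  assumes "m \<noteq> 0" "m \<noteq> var_monom i"
  shows "Poly_Mapping.lookup (basis_poly n P Q i m) k =
    (if k = m then 1 else if k = 0 then - interp_const n P Q i m
     else if k = var_monom i then - interp_slope n P Q i m else 0)"
  using assms unfolding basis_poly_def by (auto simp: lookup_minus lookup_single when_def)

lemma keys_basis_poly:
  assumes "m \<noteq> 0" "m \<noteq> var_monom i"
  shows "Poly_Mapping.keys (basis_poly n P Q i m) \<subseteq> {m, 0, var_monom i}"
    and "m \<in> Poly_Mapping.keys (basis_poly n P Q i m)"
  by (auto simp: in_keys_iff lookup_basis_poly[OF assms] split: if_splits)

lemma basis_poly_neq_zero: "m \<noteq> 0 \<Longrightarrow> m \<noteq> var_monom i \<Longrightarrow> basis_poly n P Q i m \<noteq> 0"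
  using keys_basis_poly(2)[of m i n P Q] by auto

lemma nonstandard_dvd_cases:
  assumes "m \<in> nonstandard_monoms n i"
  obtains j where "j < n" "j \<noteq> i" "monom_dvd (var_monom j) m"
  | "monom_dvd (var_monom i + var_monom i) m"
proof -
  have m: "m \<in> monoms n" "m \<noteq> 0" "m \<noteq> var_monom i"
    using nonstandard_monomsD[OF assms] by auto
  show ?thesis
  proof (cases "\<exists>j<n. j \<noteq> i \<and> Poly_Mapping.lookup m j \<noteq> 0")
    case True
    then show ?thesis using that(1) by (auto simp: var_monom_dvd_iff)
  next
    case False
    then have others: "\<forall>k\<noteq>i. Poly_Mapping.lookup m k = 0"
      using m(1) by (metis monoms_iff not_le)
    then have "Poly_Mapping.lookup m i \<noteq> 0"
      using m(2) unfolding monom_eq_zero_iff by metis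
    moreover have "Poly_Mapping.lookup m i \<noteq> 1"
      using others m(3) unfolding monom_eq_var_monom_iff by blast
    ultimately have "Poly_Mapping.lookup m i \<ge> 2"
      by linarith
    then show ?thesis using that(2) by (simp add: var_monom_sq_dvd_iff)
  qed
qed

lemma var_monom_in_min_nonstandard:
  "j < n \<Longrightarrow> j \<noteq> i \<Longrightarrow> var_monom j \<in> min_nonstandard_monoms n i"
  using monom_dvd_var_monom
  by (auto simp: min_nonstandard_monoms_def nonstandard_monoms_def var_monom_in_monoms
      var_monom_eq_iff)

lemma var_monom_sq_in_min_nonstandard:
  assumes "i < n"
  shows "var_monom i + var_monom i \<in> min_nonstandard_monoms n i"
proof -
  have "m = var_monom i + var_monom i"
    if "m \<in> nonstandard_monoms n i" "monom_dvd m (var_monom i + var_monom i)" for m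
  proof -
    have le: "Poly_Mapping.lookup m k \<le> (if k = i then 2 else 0)" for k
      using that(2) unfolding monom_dvd_def lookup_var_monom_sq by blast
    then have others: "\<forall>k\<noteq>i. Poly_Mapping.lookup m k = 0"
      by (metis (full_types) le_zero_eq)
    have "m \<noteq> 0" "m \<noteq> var_monom i"
      using nonstandard_monomsD[OF that(1)] by auto
    with others have "Poly_Mapping.lookup m i \<noteq> 0" "Poly_Mapping.lookup m i \<noteq> 1"
      unfolding monom_eq_zero_iff monom_eq_var_monom_iff by (metis, blast)
    then have "Poly_Mapping.lookup m i = 2"
      using le[of i] by simp
    with others show ?thesis
      by (intro poly_mapping_eqI) (simp add: lookup_var_monom_sq)
  qed
  then show ?thesis
    using assms by (auto simp: min_nonstandard_monoms_def nonstandard_monoms_def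
        var_monom_sq_neq add_in_monoms var_monom_in_monoms)
qed

lemma min_nonstandard_monoms_eq:
  assumes "i < n"
  shows "min_nonstandard_monoms n i = var_monom ` ({..<n} - {i}) \<union> {var_monom i + var_monom i}"
    (is "_ = ?M")
proof
  show "min_nonstandard_monoms n i \<subseteq> ?M"
  proof
    fix m assume "m \<in> min_nonstandard_monoms n i"
    then have m: "m \<in> nonstandard_monoms n i"
      and min: "\<And>m'. m' \<in> nonstandard_monoms n i \<Longrightarrow> monom_dvd m' m \<Longrightarrow> m' = m"
      unfolding min_nonstandard_monoms_def by auto
    from m show "m \<in> ?M"
    proof (cases rule: nonstandard_dvd_cases)
      case (1 j)
      then have "var_monom j = m"
        by (intro min) (auto simp: nonstandard_monoms_def var_monom_in_monoms var_monom_eq_iff)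
      then show ?thesis using 1 by auto
    next
      case 2
      then have "var_monom i + var_monom i = m"
        using assms by (intro min)
          (auto simp: nonstandard_monoms_def var_monom_sq_neq add_in_monoms var_monom_in_monoms)
      then show ?thesis by auto
    qed
  qed
  show "?M \<subseteq> min_nonstandard_monoms n i"
    using var_monom_in_min_nonstandard var_monom_sq_in_min_nonstandard[OF assms] by auto
qed

lemma min_nonstandard_monoms_subset: "min_nonstandard_monoms n i \<subseteq> nonstandard_monoms n i"
  unfolding min_nonstandard_monoms_def by auto

lemma ex_min_nonstandard_monom_dvd:
  assumes "i < n" "m \<in> nonstandard_monoms n i"
  shows "\<exists>m'\<in>min_nonstandard_monoms n i. monom_dvd m' m"
  using assms(2)
  by (cases rule: nonstandard_dvd_cases) (auto simp: min_nonstandard_monoms_eq[OF assms(1)])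

lemma min_nonstandard_not_dvd_keys:
  assumes "m \<in> min_nonstandard_monoms n i" "m' \<in> min_nonstandard_monoms n i" "m' \<noteq> m"
    and k: "k \<in> Poly_Mapping.keys (basis_poly n P Q i m)"
  shows "\<not> monom_dvd m' k"
proof -
  have ns: "m \<in> nonstandard_monoms n i" "m' \<in> nonstandard_monoms n i"
    using assms(1,2) min_nonstandard_monoms_subset by auto
  have "k \<in> {m, 0, var_monom i}"
    using keys_basis_poly(1) nonstandard_monomsD[OF ns(1)] k by blast
  moreover have "\<not> monom_dvd m' m"
    using assms(1,3) ns(2) unfolding min_nonstandard_monoms_def by auto
  ultimately show ?thesis
    using nonstandard_monomsD[OF ns(2)] monom_dvd_var_monom by (auto simp: monom_dvd_zero_iff)
qed

lemma red_basis_inj: "inj_on (red_basis n P Q) {..<n}"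
proof
  fix i k assume i: "i \<in> {..<n}" and k: "k \<in> {..<n}" and eq: "red_basis n P Q i = red_basis n P Q k"
  let ?s = "var_monom i + var_monom i"
  have "basis_poly n P Q i ?s \<in> red_basis n P Q i"
    using i by (simp add: red_basis_def min_nonstandard_monoms_eq)
  then have "basis_poly n P Q i ?s \<in> red_basis n P Q k"
    using eq by simp
  then obtain m where m: "m \<in> min_nonstandard_monoms n k"
    "basis_poly n P Q i ?s = basis_poly n P Q k m"
    unfolding red_basis_def by auto
  have "m \<noteq> 0" "m \<noteq> var_monom k"
    using nonstandard_monomsD m(1) min_nonstandard_monoms_subset by blast+
  then have "?s \<in> {m, 0, var_monom k}"
    using keys_basis_poly[of ?s i n P Q] keys_basis_poly(1)[of m k n P Q] m(2) var_monom_sq_neq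
    by auto
  then have "?s = m"
    using var_monom_sq_neq by auto
  then have "?s = var_monom k + var_monom k"
    using m(1) k var_monom_sq_neq(2) by (auto simp: min_nonstandard_monoms_eq)
  then show "i = k"
    by (simp add: var_monom_sq_eq_iff)
qed

locale two_points =
  fixes n :: nat and P Q :: "'a::field list" and i :: nat
  assumes i_less: "i < n" and coord_neq: "P ! i \<noteq> Q ! i"
begin

abbreviation ideal_PQ :: "'a mpoly set" where
  "ideal_PQ \<equiv> vanishing_ideal n {P, Q}"

lemma eval_mpoly_affine:
  assumes "m \<noteq> 0" "m \<noteq> var_monom i" "Poly_Mapping.keys g \<subseteq> {m, 0, var_monom i}"
  shows "eval_mpoly n g x = Poly_Mapping.lookup g m * monom_val n m x + Poly_Mapping.lookup g 0
           + Poly_Mapping.lookup g (var_monom i) * x ! i"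
  using assms
  by (subst eval_mpoly_eq_sum[of "{m, 0, var_monom i}"])
    (auto simp: monom_val_var_monom i_less add.assoc)

lemma basis_poly_in_ideal:
  assumes "m \<in> nonstandard_monoms n i"
  shows "basis_poly n P Q i m \<in> ideal_PQ"
proof -
  have m: "m \<in> monoms n" "m \<noteq> 0" "m \<noteq> var_monom i"
    using nonstandard_monomsD[OF assms] by auto
  have "basis_poly n P Q i m \<in> polys n"
    using keys_basis_poly(1)[OF m(2,3), of n P Q] m(1) var_monom_in_monoms[OF i_less]
    unfolding polys_def by auto
  moreover have ev: "eval_mpoly n (basis_poly n P Q i m) x
      = monom_val n m x - interp_const n P Q i m - interp_slope n P Q i m * x ! i" for x
    using m by (simp add: eval_mpoly_affine keys_basis_poly lookup_basis_poly)
  have "interp_slope n P Q i m * (P ! i - Q ! i) = monom_val n m P - monom_val n m Q"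
    unfolding interp_slope_def using coord_neq by simp
  then have "eval_mpoly n (basis_poly n P Q i m) x = 0" if "x \<in> {P, Q}" for x
    using that unfolding ev interp_const_def by (auto simp: algebra_simps)
  ultimately show ?thesis
    unfolding vanishing_ideal_def by blast
qed

lemma ideal_elem_eq_basis_poly:
  assumes g: "g \<in> ideal_PQ" and m: "m \<in> nonstandard_monoms n i"
    and keys: "Poly_Mapping.keys g \<subseteq> {m, 0, var_monom i}" and monic: "Poly_Mapping.lookup g m = 1"
  shows "g = basis_poly n P Q i m"
proof -
  have m0: "m \<noteq> 0" "m \<noteq> var_monom i"
    using nonstandard_monomsD[OF m] by auto
  define \<alpha> where "\<alpha> = Poly_Mapping.lookup g 0"
  define \<beta> where "\<beta> = Poly_Mapping.lookup g (var_monom i)"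
  have "monom_val n m x + \<alpha> + \<beta> * x ! i = 0" if "x \<in> {P, Q}" for x
    using g that eval_mpoly_affine[OF m0 keys] monic
    unfolding vanishing_ideal_def \<alpha>_def \<beta>_def by auto
  then have eP: "monom_val n m P + \<alpha> + \<beta> * P ! i = 0"
    and eQ: "monom_val n m Q + \<alpha> + \<beta> * Q ! i = 0"
    by auto
  then have "\<beta> * (P ! i - Q ! i) = - (monom_val n m P - monom_val n m Q)"
    by (simp add: algebra_simps) (metis add_diff_cancel_left')
  then have \<beta>: "\<beta> = - interp_slope n P Q i m"
    unfolding interp_slope_def using coord_neq by (simp add: field_simps)
  with eP have \<alpha>: "\<alpha> = - interp_const n P Q i m"
    unfolding interp_const_def by (simp add: algebra_simps)
  show ?thesis
  proof (rule poly_mapping_eqI)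
    fix k
    show "Poly_Mapping.lookup g k = Poly_Mapping.lookup (basis_poly n P Q i m) k"
      using lookup_basis_poly[OF m0, of n P Q k] keys monic \<alpha> \<beta>
      unfolding \<alpha>_def \<beta>_def by (auto simp: in_keys_iff)
  qed
qed

end

locale two_point_order = two_points n P Q i + monomial_ord n ord
  for n :: nat and P Q :: "'a::field list" and i :: nat and ord :: "monom \<Rightarrow> monom \<Rightarrow> bool" +
  assumes var_least: "\<And>j. j < n \<Longrightarrow> P ! j \<noteq> Q ! j \<Longrightarrow> ord (var_monom i) (var_monom j)"
begin

lemma monom_val_below_var:
  assumes k: "k \<in> monoms n" "ord k (var_monom i)" "k \<noteq> var_monom i"
  shows "monom_val n k P = monom_val n k Q"
proof (rule monom_val_eqI, rule ccontr)
  fix j assume j: "j < n" "Poly_Mapping.lookup k j > 0" and "P ! j \<noteq> Q ! j"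
  then have "ord (var_monom i) (var_monom j)" "ord (var_monom j) k"
    using var_least var_monom_ord k(1) by auto
  then have "ord (var_monom i) k"
    using ord_trans var_monom_in_monoms i_less j(1) k(1) by blast
  then show False
    using ord_antisym k var_monom_in_monoms[OF i_less] by blast
qed

lemma lead_monom_basis_poly:
  assumes m: "m \<in> nonstandard_monoms n i"
  shows "lead_monom ord (basis_poly n P Q i m) = m"
proof -
  have m': "m \<in> monoms n" "m \<noteq> 0" "m \<noteq> var_monom i"
    using nonstandard_monomsD[OF m] by auto
  have "ord (var_monom i) m" if "var_monom i \<in> Poly_Mapping.keys (basis_poly n P Q i m)"
  proof -
    have "interp_slope n P Q i m \<noteq> 0"
      using that m' by (auto simp: in_keys_iff lookup_basis_poly)
    then have "monom_val n m P \<noteq> monom_val n m Q"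
      unfolding interp_slope_def by auto
    then show ?thesis
      using monom_val_below_var m' ord_total var_monom_in_monoms[OF i_less] by blast
  qed
  then show ?thesis
    using basis_poly_in_ideal[OF m] keys_basis_poly[OF m'(2,3), of n P Q] ord_refl zero_ord m'(1)
    by (intro lead_monom_eqI) (auto simp: vanishing_ideal_def)
qed

lemma lead_monom_in_nonstandard:
  assumes f: "f \<in> ideal_PQ" "f \<noteq> 0"
  shows "lead_monom ord f \<in> nonstandard_monoms n i"
proof -
  have poly: "f \<in> polys n" and ev: "eval_mpoly n f P = 0" "eval_mpoly n f Q = 0"
    using f unfolding vanishing_ideal_def by auto
  define L where "L = lead_monom ord f"
  have L: "L \<in> Poly_Mapping.keys f" "\<forall>k\<in>Poly_Mapping.keys f. ord k L"
    using lead_monom_in_keys[OF poly f(2)] unfolding L_def by auto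
  have "L \<noteq> 0"
    using lead_monom_zero_imp_const[OF poly f(2)] ev L(1) unfolding L_def
    by (auto simp: in_keys_iff)
  moreover have "L \<noteq> var_monom i"
  proof
    assume L_eq: "L = var_monom i"
    have split: "eval_mpoly n f x = Poly_Mapping.lookup f L * x ! i
        + (\<Sum>k\<in>Poly_Mapping.keys f - {L}. Poly_Mapping.lookup f k * monom_val n k x)" for x
      unfolding eval_mpoly_def monom_val_def[symmetric] using L(1)
      by (subst sum.remove[of _ L]) (auto simp: L_eq monom_val_var_monom[OF i_less])
    have "monom_val n k P = monom_val n k Q" if "k \<in> Poly_Mapping.keys f - {L}" for k
      using that L(2) keys_subset_monoms[OF poly] L_eq by (intro monom_val_below_var) auto
    then have "eval_mpoly n f P - eval_mpoly n f Q = Poly_Mapping.lookup f L * (P ! i - Q ! i)"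
      unfolding split by (simp add: algebra_simps)
    then show False
      using ev coord_neq L(1) by (simp add: in_keys_iff)
  qed
  ultimately show ?thesis
    using L(1) keys_subset_monoms[OF poly] unfolding nonstandard_monoms_def L_def by auto
qed

lemma red_basis_reduced: "reduced_groebner_basis n ord ideal_PQ (red_basis n P Q i)"
  unfolding reduced_groebner_basis_def groebner_basis_def
proof (intro conjI ballI impI)
  show "finite (red_basis n P Q i)"
    unfolding red_basis_def by (simp add: min_nonstandard_monoms_eq[OF i_less])
  show "red_basis n P Q i \<subseteq> ideal_PQ"
    unfolding red_basis_def using basis_poly_in_ideal min_nonstandard_monoms_subset by blast
  show "0 \<notin> red_basis n P Q i"
    unfolding red_basis_def
    using basis_poly_neq_zero nonstandard_monomsD min_nonstandard_monoms_subset by fastforce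
next
  fix f assume "f \<in> ideal_PQ" "f \<noteq> 0"
  then obtain m where m: "m \<in> min_nonstandard_monoms n i" "monom_dvd m (lead_monom ord f)"
    using ex_min_nonstandard_monom_dvd[OF i_less lead_monom_in_nonstandard] by blast
  then show "\<exists>g\<in>red_basis n P Q i. monom_dvd (lead_monom ord g) (lead_monom ord f)"
    unfolding red_basis_def using lead_monom_basis_poly min_nonstandard_monoms_subset by force
next
  fix g assume "g \<in> red_basis n P Q i"
  then obtain m where m: "m \<in> nonstandard_monoms n i" "g = basis_poly n P Q i m"
    unfolding red_basis_def using min_nonstandard_monoms_subset by auto
  then show "lead_coeff_m ord g = 1"
    unfolding lead_coeff_m_def using nonstandard_monomsD[OF m(1)]
    by (simp add: lead_monom_basis_poly lookup_basis_poly)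
next
  fix g h k assume "g \<in> red_basis n P Q i" "h \<in> red_basis n P Q i" "h \<noteq> g"
    and k: "k \<in> Poly_Mapping.keys g"
  then obtain m m' where m: "m \<in> min_nonstandard_monoms n i" "g = basis_poly n P Q i m"
    and m': "m' \<in> min_nonstandard_monoms n i" "h = basis_poly n P Q i m'" and "m' \<noteq> m"
    unfolding red_basis_def by auto
  then show "\<not> monom_dvd (lead_monom ord h) k"
    using min_nonstandard_not_dvd_keys k min_nonstandard_monoms_subset
    by (simp add: lead_monom_basis_poly subset_iff)
qed

context
  fixes G :: "'a mpoly set"
  assumes G: "reduced_groebner_basis n ord ideal_PQ G"
begin

lemma reduced_basis_elem:
  assumes "g \<in> G"
  shows "g \<in> ideal_PQ" "g \<in> polys n" "g \<noteq> 0" "lead_monom ord g \<in> nonstandard_monoms n i"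
  using G assms lead_monom_in_nonstandard
  unfolding reduced_groebner_basis_def groebner_basis_def vanishing_ideal_def by auto

lemma reduced_basis_covers:
  assumes "k \<in> nonstandard_monoms n i"
  shows "\<exists>h\<in>G. monom_dvd (lead_monom ord h) k"
  using G basis_poly_in_ideal[OF assms] basis_poly_neq_zero nonstandard_monomsD[OF assms]
    lead_monom_basis_poly[OF assms]
  unfolding reduced_groebner_basis_def groebner_basis_def by metis

lemma reduced_basis_keys:
  assumes g: "g \<in> G"
  shows "Poly_Mapping.keys g \<subseteq> {lead_monom ord g, 0, var_monom i}"
proof
  fix k assume k: "k \<in> Poly_Mapping.keys g"
  show "k \<in> {lead_monom ord g, 0, var_monom i}"
  proof (rule ccontr)
    assume nk: "k \<notin> {lead_monom ord g, 0, var_monom i}"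
    have km: "k \<in> monoms n"
      using keys_subset_monoms reduced_basis_elem(2)[OF g] k by blast
    then obtain h where h: "h \<in> G" "monom_dvd (lead_monom ord h) k"
      using reduced_basis_covers nk unfolding nonstandard_monoms_def by blast
    have "h = g"
      using G g h k unfolding reduced_groebner_basis_def by blast
    have L: "lead_monom ord g \<in> monoms n"
      using reduced_basis_elem(4)[OF g] nonstandard_monomsD by blast
    have "ord (lead_monom ord g) k"
      using monom_dvd_imp_ord[OF L km] h(2) \<open>h = g\<close> by simp
    moreover have "ord k (lead_monom ord g)"
      using lead_monom_in_keys(2)[OF reduced_basis_elem(2,3)[OF g]] k by blast
    ultimately show False
      using ord_antisym[OF L km] nk by auto
  qed
qed

lemma reduced_basis_lead_monoms: "lead_monom ord ` G = min_nonstandard_monoms n i"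
proof
  show "lead_monom ord ` G \<subseteq> min_nonstandard_monoms n i"
  proof
    fix m assume "m \<in> lead_monom ord ` G"
    then obtain g where g: "g \<in> G" "m = lead_monom ord g" by auto
    have "m' = m" if m': "m' \<in> nonstandard_monoms n i" "monom_dvd m' m" for m'
    proof -
      obtain h where h: "h \<in> G" "monom_dvd (lead_monom ord h) m'"
        using reduced_basis_covers[OF m'(1)] by blast
      have "m \<in> Poly_Mapping.keys g"
        using lead_monom_in_keys(1)[OF reduced_basis_elem(2,3)[OF g(1)]] g(2) by simp
      then have "h = g"
        using G g(1) h monom_dvd_trans[OF h(2) m'(2)] unfolding reduced_groebner_basis_def by blast
      then show ?thesis
        using h(2) m'(2) g(2) monom_dvd_antisym by blast
    qed
    then show "m \<in> min_nonstandard_monoms n i"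
      unfolding min_nonstandard_monoms_def using reduced_basis_elem(4) g by auto
  qed
next
  show "min_nonstandard_monoms n i \<subseteq> lead_monom ord ` G"
  proof
    fix m assume m: "m \<in> min_nonstandard_monoms n i"
    then obtain h where h: "h \<in> G" "monom_dvd (lead_monom ord h) m"
      using reduced_basis_covers min_nonstandard_monoms_subset by blast
    then have "lead_monom ord h = m"
      using m reduced_basis_elem(4)[OF h(1)] unfolding min_nonstandard_monoms_def by blast
    then show "m \<in> lead_monom ord ` G"
      using h(1) by force
  qed
qed

lemma reduced_basis_eq_red_basis: "G = red_basis n P Q i"
proof -
  have "g = basis_poly n P Q i (lead_monom ord g)" if g: "g \<in> G" for g
    using G g reduced_basis_elem(1,4)[OF g] reduced_basis_keys[OF g]
    unfolding reduced_groebner_basis_def lead_coeff_m_def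
    by (intro ideal_elem_eq_basis_poly) auto
  then have "G = basis_poly n P Q i ` lead_monom ord ` G"
    by (simp add: image_image cong: image_cong)
  then show ?thesis
    unfolding red_basis_def reduced_basis_lead_monoms .
qed

end

end

subsection \<open>A weighted order making a given variable least\<close>

definition weight :: "nat \<Rightarrow> nat \<Rightarrow> monom \<Rightarrow> nat" where
  "weight n i a = (\<Sum>j<n. (if j = i then 1 else 2) * Poly_Mapping.lookup a j)"

definition exponents :: "nat \<Rightarrow> monom \<Rightarrow> nat list" where
  "exponents n a = map (Poly_Mapping.lookup a) [0..<n]"

definition weight_ord :: "nat \<Rightarrow> nat \<Rightarrow> monom \<Rightarrow> monom \<Rightarrow> bool" where
  "weight_ord n i a b \<longleftrightarrow>
     weight n i a < weight n i b \<or> (weight n i a = weight n i b \<and> exponents n a \<le> exponents n b)"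

lemma weight_add: "weight n i (a + b) = weight n i a + weight n i b"
  unfolding weight_def lookup_add by (simp add: sum.distrib algebra_simps)

lemma weight_pos:
  assumes "a \<in> monoms n" "a \<noteq> 0"
  shows "weight n i a > 0"
proof (rule ccontr)
  assume "\<not> weight n i a > 0"
  then have "\<forall>j<n. Poly_Mapping.lookup a j = 0"
    unfolding weight_def by simp (metis lessThan_iff one_neq_zero zero_neq_numeral)
  then show False
    using assms by (metis monom_eq_zero_iff monoms_iff not_le)
qed

lemma weight_var_monom: "k < n \<Longrightarrow> weight n i (var_monom k) = (if k = i then 1 else 2)"
  unfolding weight_def lookup_var_monom by (simp add: if_distrib[of "\<lambda>e. _ * e"] cong: if_cong)

lemma exponents_inj: "a \<in> monoms n \<Longrightarrow> b \<in> monoms n \<Longrightarrow> exponents n a = exponents n b \<Longrightarrow> a = b"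
  unfolding exponents_def monoms_iff
  by (intro poly_mapping_eqI) (metis map_eq_conv atLeastLessThan_iff le0 not_le set_upt)

lemma lex_map_add_mono:
  fixes f g h :: "nat \<Rightarrow> nat"
  shows "map f js \<le> map g js \<Longrightarrow> map (\<lambda>j. f j + h j) js \<le> map (\<lambda>j. g j + h j) js"
  by (induction js) auto

lemma monomial_order_weight_ord: "monomial_order n (weight_ord n i)"
  unfolding monomial_order_def weight_ord_def
proof (intro conjI ballI impI)
  fix a b assume "a \<in> monoms n" "b \<in> monoms n"
    "(weight n i a < weight n i b \<or> weight n i a = weight n i b \<and> exponents n a \<le> exponents n b) \<and>
     (weight n i b < weight n i a \<or> weight n i b = weight n i a \<and> exponents n b \<le> exponents n a)"
  then show "a = b"
    using exponents_inj by (metis antisym less_asym)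
next
  fix a assume "a \<in> monoms n"
  then show "weight n i 0 < weight n i a \<or>
      weight n i 0 = weight n i a \<and> exponents n 0 \<le> exponents n a"
    using weight_pos by (cases "a = 0") (auto simp: weight_def)
next
  fix a b c
  assume "weight n i a < weight n i b \<or> weight n i a = weight n i b \<and> exponents n a \<le> exponents n b"
  then show "weight n i (a + c) < weight n i (b + c) \<or>
      weight n i (a + c) = weight n i (b + c) \<and> exponents n (a + c) \<le> exponents n (b + c)"
    unfolding weight_add exponents_def lookup_add using lex_map_add_mono by auto
qed (auto intro: order_trans)

lemma weight_ord_var_least: "i < n \<Longrightarrow> j < n \<Longrightarrow> weight_ord n i (var_monom i) (var_monom j)"
  unfolding weight_ord_def by (simp add: weight_var_monom)

subsection \<open>Counting reduced bases\<close>

lemma reduced_GBs_two_points_subset: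
  fixes P Q :: "'a::field list"
  assumes "P \<in> points n" "Q \<in> points n" "P \<noteq> Q"
  shows "reduced_GBs n (vanishing_ideal n {P, Q}) \<subseteq> red_basis n P Q ` {j. j < n \<and> P ! j \<noteq> Q ! j}"
proof
  fix G assume "G \<in> reduced_GBs n (vanishing_ideal n {P, Q})"
  then obtain ord where ord: "monomial_order n ord"
    and G: "reduced_groebner_basis n ord (vanishing_ideal n {P, Q}) G"
    unfolding reduced_GBs_def by auto
  interpret monomial_ord n ord
    by (rule monomial_ord.intro) (fact ord)
  define D where "D = {j. j < n \<and> P ! j \<noteq> Q ! j}"
  have "D \<noteq> {}"
    using assms unfolding D_def points_def by (auto intro: nth_equalityI)
  then obtain i where i: "i \<in> D" "\<forall>j\<in>D. ord (var_monom i) (var_monom j)"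
    using ex_least[of "var_monom ` D"] var_monom_in_monoms unfolding D_def by auto
  interpret two_point_order n P Q i ord
    using i ord by unfold_locales (auto simp: D_def)
  show "G \<in> red_basis n P Q ` D"
    using reduced_basis_eq_red_basis[OF G] i(1) by auto
qed

lemma card_reduced_GBs_two_points_le:
  fixes P Q :: "'a::field list"
  assumes "P \<in> points n" "Q \<in> points n" "P \<noteq> Q"
  shows "finite (reduced_GBs n (vanishing_ideal n {P, Q}))"
    and "card (reduced_GBs n (vanishing_ideal n {P, Q})) \<le> n"
proof -
  have sub: "reduced_GBs n (vanishing_ideal n {P, Q}) \<subseteq> red_basis n P Q ` {..<n}"
    using reduced_GBs_two_points_subset[OF assms] by auto
  then show "finite (reduced_GBs n (vanishing_ideal n {P, Q}))"
    using finite_surj by blast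
  show "card (reduced_GBs n (vanishing_ideal n {P, Q})) \<le> n"
    using card_mono[OF _ sub] card_image_le[of "{..<n}" "red_basis n P Q"] by simp
qed

lemma card_reduced_GBs_zero_one:
  fixes n :: nat
  defines "P \<equiv> replicate n (0::'a::field)" and "Q \<equiv> replicate n 1"
  assumes "n \<ge> 1"
  shows "card (reduced_GBs n (vanishing_ideal n {P, Q})) = n"
proof -
  have pts: "P \<in> points n" "Q \<in> points n" "P \<noteq> Q"
    using assms(3) unfolding P_def Q_def points_def by auto
  have "red_basis n P Q i \<in> reduced_GBs n (vanishing_ideal n {P, Q})" if "i < n" for i
  proof -
    interpret two_point_order n P Q i "weight_ord n i"
      using that monomial_order_weight_ord weight_ord_var_least
      by unfold_locales (auto simp: P_def Q_def)
    show ?thesis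
      unfolding reduced_GBs_def using red_basis_reduced monomial_order_weight_ord by auto
  qed
  then have "red_basis n P Q ` {..<n} \<subseteq> reduced_GBs n (vanishing_ideal n {P, Q})"
    by auto
  then have "card (red_basis n P Q ` {..<n}) \<le> card (reduced_GBs n (vanishing_ideal n {P, Q}))"
    by (rule card_mono[OF card_reduced_GBs_two_points_le(1)[OF pts]])
  then show ?thesis
    using card_reduced_GBs_two_points_le(2)[OF pts] card_image[OF red_basis_inj[of n P Q]] by simp
qed

theorem mainTheorem2:
  fixes n :: nat
  assumes "n \<ge> 1"
  shows "Max {card (reduced_GBs n (vanishing_ideal n {P, Q}) :: ('p::prime_card mod_ring) mpoly set set)
              | P Q. P \<in> points n \<and> Q \<in> points n \<and> P \<noteq> Q} = n"
proof -
  let ?S = "{card (reduced_GBs n (vanishing_ideal n {P, Q}) :: ('p::prime_card mod_ring) mpoly set set)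
              | P Q. P \<in> points n \<and> Q \<in> points n \<and> P \<noteq> Q}"
  have bound: "\<forall>k\<in>?S. k \<le> n"
    using card_reduced_GBs_two_points_le(2) by blast
  then have "finite ?S"
    by (meson finite_atMost finite_subset subsetI atMost_iff)
  have "replicate n (0::'p mod_ring) \<in> points n" "replicate n (1::'p mod_ring) \<in> points n"
    "replicate n (0::'p mod_ring) \<noteq> replicate n 1"
    using assms unfolding points_def by auto
  then have "n \<in> ?S"
    using card_reduced_GBs_zero_one[OF assms, where 'a = "'p mod_ring"]
    by (intro CollectI exI[of _ "replicate n 0"] exI[of _ "replicate n 1"]) simp
  with \<open>finite ?S\<close> bound show ?thesis
    by (intro Max_eqI) auto
qed

end
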